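(* In the deterministic tandem system TSC(RO) with $n$ jobs, suppose there are nonnegative reals $\Gamma^j_{\min}(k),\Gamma^j_{\max}(k)$, $\Gamma_{\min}(k),\Gamma_{\max}(k)$ ($1\le j\le J$, $1\le k\le n$) such that the nonnegative interarrival and service times satisfy, for all $k=1,\dots,n$, $$\Gamma^j_{\min}(k)\le\sum_{i=k}^nV^j_i\le\Gamma^j_{\max}(k),\qquad \Gamma_{\min}(k)\le\sum_{i=k}^nU_i\le\Gamma_{\max}(k).$$ With the convention $\Gamma^j_{\min}(n+1)=\Gamma_{\min}(n+1)=0$, the sojourn time of job $n$ satisfies $$W_n\le\max_{n\ge k_J\ge\dots\ge k_1\ge1}\ \sum_{j=1}^{J-1}\big(\Gamma^j_{\max}(k_j)-\Gamma^j_{\min}(k_{j+1}+1)\big)+\Gamma^J_{\max}(k_J)-\Gamma_{\min}(k_1+1).$$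
   Context: TSC(RO): servers $S_1,\dots,S_J$ in tandem, initially empty, $n$ jobs; job $i$ arrives to $S_1$ at time $\sum_{l=1}^iU_l$; each server is FIFO, work-conserving, with infinite buffer; job $i$ needs service $V^j_i\ge0$ at $S_j$, then joins $S_{j+1}$, leaving after $S_J$. $W_n$ is the time between job $n$'s arrival at $S_1$ and its service completion at $S_J$. *)

theory Defs
  imports Main "HOL-Library.Extended_Real"
begin

text \<open>Jobs are indexed 1,2,...; servers 1..J.
  U l = interarrival time of job l; V j i = service requirement of job i at server j.
  arr U i = arrival time of job i at S_1 = sum of U_1..U_i.
  dep U V j i = service completion time of job i at server S_j (dep U V 0 i = arr U i).
  FIFO, work-conserving, infinite buffer: job i starts service at S_j when it has
  left S_(j-1) and job i-1 has left S_j (Lindley recursion).\<close>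

definition arr :: "(nat \<Rightarrow> real) \<Rightarrow> nat \<Rightarrow> real" where
  "arr U i = (\<Sum>l = 1..i. U l)"

fun dep :: "(nat \<Rightarrow> real) \<Rightarrow> (nat \<Rightarrow> nat \<Rightarrow> real) \<Rightarrow> nat \<Rightarrow> nat \<Rightarrow> real" where
  "dep U V 0 i = arr U i"
| "dep U V (Suc j) 0 = 0"
| "dep U V (Suc j) (Suc i) =
     (if i = 0 then dep U V j 1 else max (dep U V (Suc j) i) (dep U V j (Suc i)))
     + V (Suc j) (Suc i)"

definition sojourn :: "(nat \<Rightarrow> real) \<Rightarrow> (nat \<Rightarrow> nat \<Rightarrow> real) \<Rightarrow> nat \<Rightarrow> nat \<Rightarrow> real" where
  "sojourn U V J i = dep U V J i - arr U i"

end

theory Submission imports Defs "HOL-Library.FuncSet" begin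

(* The Lindley recursion defining dep is a max-plus recursion, so the
   departure time of job i from server j is the weight of a heaviest monotone lattice
   path 1 <= k_1 <= ... <= k_j <= k_(j+1) = i, whose weight is the arrival time of job
   k_1 plus, for each server l <= j, the service times of the jobs k_l..k_(l+1) at
   server l.  Only one direction is needed: dep is attained by some such path
   (dep_is_path_weight, by induction on the server and the job, following the branch
   of the maximum).  The weight of a path minus the arrival time of job n is then
   bounded segment by segment (path_weight_bound): a segment sum over k_l..k_(l+1) is
   the tail sum from k_l minus the tail sum from k_(l+1)+1, and tail sums are bounded
   by the Gamma envelopes, the convention Gamma(n+1) = 0 covering the empty tail.
   Finally the path is one of the finitely many index sequences of the theorem
   (finite_envelope_values), so its bound is at most the maximum. *)

definition lattice_path :: "nat \<Rightarrow> nat \<Rightarrow> (nat \<Rightarrow> nat) \<Rightarrow> bool" where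
  "lattice_path j i k \<longleftrightarrow> 1 \<le> k 1 \<and> (\<forall>l\<in>{1..j}. k l \<le> k (Suc l)) \<and> k (Suc j) = i"

definition path_weight :: "(nat \<Rightarrow> real) \<Rightarrow> (nat \<Rightarrow> nat \<Rightarrow> real) \<Rightarrow> nat \<Rightarrow> (nat \<Rightarrow> nat) \<Rightarrow> real" where
  "path_weight U V j k = arr U (k 1) + (\<Sum>l = 1..j. \<Sum>m = k l..k (Suc l). V l m)"

lemma lattice_path_range:
  assumes "lattice_path j i k" "l \<in> {1..Suc j}"
  shows "1 \<le> k l \<and> k l \<le> i"
proof -
  have mono: "\<And>m. m \<in> {1..j} \<Longrightarrow> k m \<le> k (Suc m)" and "1 \<le> k 1" "k (Suc j) = i"
    using assms(1) by (auto simp: lattice_path_def)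
  note chain = lift_Suc_mono_le_ivl[where f = k and N = "{1..j}", OF mono]
  have "k 1 \<le> k l" using assms(2) by (intro chain) auto
  moreover have "k l \<le> k (Suc j)" using assms(2) by (intro chain) auto
  ultimately show ?thesis using \<open>1 \<le> k 1\<close> \<open>k (Suc j) = i\<close> by simp
qed

lemma lattice_path_extend:
  assumes "lattice_path j i k" "i \<le> i'"
  shows "lattice_path (Suc j) i' (k(Suc (Suc j) := i'))"
  using assms unfolding lattice_path_def by (auto simp: le_Suc_eq)

lemma lattice_path_truncate:
  assumes "lattice_path (Suc j) i k"
  shows "lattice_path j (k (Suc j)) k"
  using assms unfolding lattice_path_def by simp

lemma path_weight_extend:
  "path_weight U V (Suc j) (k(Suc (Suc j) := i')) =
     path_weight U V j k + (\<Sum>m = k (Suc j)..i'. V (Suc j) m)"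
proof -
  have "(\<Sum>l = 1..j. \<Sum>m = (k(Suc (Suc j) := i')) l..(k(Suc (Suc j) := i')) (Suc l). V l m)
      = (\<Sum>l = 1..j. \<Sum>m = k l..k (Suc l). V l m)"
    by (rule sum.cong) auto
  then show ?thesis by (simp add: path_weight_def)
qed

lemma path_weight_advance:
  assumes "lattice_path (Suc j) i k"
  shows "path_weight U V (Suc j) (k(Suc (Suc j) := Suc i)) = path_weight U V (Suc j) k + V (Suc j) (Suc i)"
proof -
  have end_i: "k (Suc (Suc j)) = i" and before: "k (Suc j) \<le> i"
    using assms by (auto simp: lattice_path_def)
  have "path_weight U V (Suc j) k = path_weight U V (Suc j) (k(Suc (Suc j) := i))"
    using end_i by (metis fun_upd_triv)
  also have "\<dots> = path_weight U V j k + (\<Sum>m = k (Suc j)..i. V (Suc j) m)"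
    by (rule path_weight_extend)
  finally have "path_weight U V (Suc j) k = path_weight U V j k + (\<Sum>m = k (Suc j)..i. V (Suc j) m)" .
  moreover have "path_weight U V (Suc j) (k(Suc (Suc j) := Suc i))
      = path_weight U V j k + (\<Sum>m = k (Suc j)..Suc i. V (Suc j) m)"
    by (rule path_weight_extend)
  ultimately show ?thesis using before by simp
qed

text \<open>Induction on the server, and inside
  on the job, following the branch of the maximum in the Lindley recursion.\<close>
lemma dep_is_path_weight:
  assumes "1 \<le> i"
  shows "\<exists>k. lattice_path j i k \<and> dep U V j i = path_weight U V j k"
  using assms
proof (induction j arbitrary: i)
  case 0
  have "lattice_path 0 i (\<lambda>_. i)" using 0 by (auto simp: lattice_path_def)
  moreover have "dep U V 0 i = path_weight U V 0 (\<lambda>_. i)" by (simp add: path_weight_def)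
  ultimately show ?case by blast
next
  case (Suc j)
  show ?case using Suc.prems
  proof (induction i rule: dec_induct)
    case base
    text \<open>The first job only waits for its own departure from server j.\<close>
    obtain k where k: "lattice_path j 1 k" "dep U V j 1 = path_weight U V j k"
      using Suc.IH[of 1] by blast
    have "k (Suc j) = 1" using k(1) by (simp add: lattice_path_def)
    then have "dep U V (Suc j) 1 = path_weight U V (Suc j) (k(Suc (Suc j) := 1))"
      using k(2) by (simp add: path_weight_extend)
    with lattice_path_extend[OF k(1) order_refl] show ?case by blast
  next
    case (step i)
    have rec: "dep U V (Suc j) (Suc i) = max (dep U V (Suc j) i) (dep U V j (Suc i)) + V (Suc j) (Suc i)"
      using step.hyps by simp
    show ?case
    proof (cases "dep U V j (Suc i) \<le> dep U V (Suc j) i")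
      case True
      text \<open>Job Suc i waited for job i at server Suc j: advance the path of job i.\<close>
      obtain k where k: "lattice_path (Suc j) i k" "dep U V (Suc j) i = path_weight U V (Suc j) k"
        using step.IH by blast
      have "dep U V (Suc j) (Suc i) = path_weight U V (Suc j) (k(Suc (Suc j) := Suc i))"
        using rec True k(2) path_weight_advance[OF k(1)] by simp
      moreover have "k (Suc j) \<le> Suc i"
        using lattice_path_range[OF k(1), of "Suc j"] by simp
      then have "lattice_path (Suc j) (Suc i) (k(Suc (Suc j) := Suc i))"
        using lattice_path_extend[OF lattice_path_truncate[OF k(1)]] by blast
      ultimately show ?thesis by blast
    next
      case False
      text \<open>Job Suc i waited for its own departure from server j: extend that path.\<close>
      obtain k where k: "lattice_path j (Suc i) k" "dep U V j (Suc i) = path_weight U V j k"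
        using Suc.IH[of "Suc i"] by auto
      have "k (Suc j) = Suc i" using k(1) by (simp add: lattice_path_def)
      then have "dep U V (Suc j) (Suc i) = path_weight U V (Suc j) (k(Suc (Suc j) := Suc i))"
        using rec False k(2) by (simp add: path_weight_extend)
      with lattice_path_extend[OF k(1) order_refl] show ?thesis by blast
    qed
  qed
qed

text \<open>A segment sum is a difference of two tail sums, hence bounded by an upper
  envelope of the first tail minus a lower envelope of the second.\<close>
lemma segment_sum_bound:
  fixes f :: "nat \<Rightarrow> real"
  assumes "a \<le> Suc b" "b \<le> n"
    and "sum f {a..n} \<le> hi" "lo \<le> sum f {Suc b..n}"
  shows "sum f {a..b} \<le> hi - lo"
proof -
  have "sum f {a..n} = sum f {a..b} + sum f {Suc b..n}"
    using sum.ub_add_nat[of a b f "n - b"] assms(1,2) by simp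
  then show ?thesis using assms(3,4) by simp
qed

lemma arr_split:
  assumes "a \<le> n"
  shows "arr U n = arr U a + (\<Sum>m = Suc a..n. U m)"
  using sum.ub_add_nat[of 1 a U "n - a"] assms by (simp add: arr_def)

lemma path_weight_bound:
  fixes U :: "nat \<Rightarrow> real" and V :: "nat \<Rightarrow> nat \<Rightarrow> real"
  assumes "J \<ge> 1" "lattice_path J n k"
    and V_bounds: "\<And>j k. 1 \<le> j \<Longrightarrow> j \<le> J \<Longrightarrow> 1 \<le> k \<Longrightarrow> k \<le> n \<Longrightarrow>
                   Gjmin j k \<le> (\<Sum>i = k..n. V j i) \<and> (\<Sum>i = k..n. V j i) \<le> Gjmax j k"
    and U_bounds: "\<And>k. 1 \<le> k \<Longrightarrow> k \<le> n \<Longrightarrow> Gmin k \<le> (\<Sum>i = k..n. U i)"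
    and conv_j: "\<And>j. 1 \<le> j \<Longrightarrow> j \<le> J \<Longrightarrow> Gjmin j (n + 1) = 0"
    and conv: "Gmin (n + 1) = 0"
  shows "path_weight U V J k - arr U n \<le>
    (\<Sum>j = 1..J - 1. Gjmax j (k j) - Gjmin j (k (j + 1) + 1)) + Gjmax J (k J) - Gmin (k 1 + 1)"
proof -
  have range: "\<And>l. l \<in> {1..Suc J} \<Longrightarrow> 1 \<le> k l \<and> k l \<le> n"
    using lattice_path_range[OF assms(2)] by blast
  have mono: "\<And>l. l \<in> {1..J} \<Longrightarrow> k l \<le> k (Suc l)" and last_n: "k (Suc J) = n"
    using assms(2) unfolding lattice_path_def by blast+
  have tail_V: "Gjmin l (Suc b) \<le> (\<Sum>m = Suc b..n. V l m)" if "1 \<le> l" "l \<le> J" "b \<le> n" for l b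
  proof (cases "b = n")
    case True then show ?thesis using conv_j[OF that(1,2)] by simp
  next
    case False then show ?thesis using V_bounds[of l "Suc b"] that by simp
  qed
  have tail_U: "Gmin (Suc b) \<le> (\<Sum>m = Suc b..n. U m)" if "b \<le> n" for b
  proof (cases "b = n")
    case True then show ?thesis using conv by simp
  next
    case False then show ?thesis using U_bounds[of "Suc b"] that by simp
  qed
  have seg: "(\<Sum>m = k l..k (Suc l). V l m) \<le> Gjmax l (k l) - Gjmin l (k (l + 1) + 1)"
    if l: "l \<in> {1..J}" for l
  proof -
    have "1 \<le> k l" "k l \<le> n" "k (Suc l) \<le> n" using range[of l] range[of "Suc l"] l by auto
    moreover have "k l \<le> Suc (k (Suc l))" using mono[OF l] by simp
    moreover have "l \<le> J" "1 \<le> l" using l by auto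
    ultimately show ?thesis
      using segment_sum_bound[of "k l" "k (Suc l)" n "V l" "Gjmax l (k l)" "Gjmin l (Suc (k (Suc l)))"]
        V_bounds[of l "k l"] tail_V[of l "k (Suc l)"] by simp
  qed
  have last: "(\<Sum>m = k J..k (Suc J). V J m) \<le> Gjmax J (k J)"
    using V_bounds[of J "k J"] range[of J] last_n \<open>J \<ge> 1\<close> by simp
  have arrival: "arr U (k 1) - arr U n \<le> - Gmin (k 1 + 1)"
    using arr_split[of "k 1" n U] tail_U[of "k 1"] range[of 1] by simp
  obtain J' where J: "J = Suc J'" using \<open>J \<ge> 1\<close> by (cases J) auto
  have "(\<Sum>l = 1..J. \<Sum>m = k l..k (Suc l). V l m)
      = (\<Sum>l = 1..J - 1. \<Sum>m = k l..k (Suc l). V l m) + (\<Sum>m = k J..k (Suc J). V J m)"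
    by (simp add: J)
  also have "\<dots> \<le> (\<Sum>l = 1..J - 1. Gjmax l (k l) - Gjmin l (k (l + 1) + 1)) + Gjmax J (k J)"
  proof (rule add_mono[OF sum_mono last])
    fix l assume "l \<in> {1..J - 1}"
    then show "(\<Sum>m = k l..k (Suc l). V l m) \<le> Gjmax l (k l) - Gjmin l (k (l + 1) + 1)"
      by (intro seg) auto
  qed
  finally show ?thesis using arrival unfolding path_weight_def by linarith
qed

lemma finite_values_on_finite_support:
  assumes "finite A" "finite B" "\<And>k. Q k \<Longrightarrow> k ` A \<subseteq> B"
    and "\<And>k k'. (\<And>j. j \<in> A \<Longrightarrow> k j = k' j) \<Longrightarrow> F k = F k'"
  shows "finite {F k | k. Q k}"
proof (rule finite_subset)
  show "{F k | k. Q k} \<subseteq> F ` PiE A (\<lambda>_. B)"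
  proof
    fix y assume "y \<in> {F k | k. Q k}"
    then obtain k where y: "y = F k" and "Q k" by blast
    then have restricted: "restrict k A \<in> PiE A (\<lambda>_. B)"
      using assms(3) by (simp add: restrict_PiE_iff image_subset_iff)
    have "F (restrict k A) = F k" by (rule assms(4)) simp
    then show "y \<in> F ` PiE A (\<lambda>_. B)" unfolding y by (rule image_eqI[OF sym restricted])
  qed
  show "finite (F ` PiE A (\<lambda>_. B))" using assms(1,2) by (intro finite_imageI finite_PiE)
qed

lemma finite_envelope_values:
  fixes Gjmin Gjmax :: "nat \<Rightarrow> nat \<Rightarrow> real" and Gmin :: "nat \<Rightarrow> real"
  assumes "J \<ge> 1"
  shows "finite { (\<Sum>j = 1..J - 1. Gjmax j (k j) - Gjmin j (k (j + 1) + 1))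
            + Gjmax J (k J) - Gmin (k 1 + 1)
          | k :: nat \<Rightarrow> nat.
            (\<forall>j \<in> {1..J}. 1 \<le> k j \<and> k j \<le> n) \<and> (\<forall>j \<in> {1..<J}. k j \<le> k (j + 1)) }"
    (is "finite {?T k | k. ?P k}")
proof (rule finite_values_on_finite_support[where A = "{1..J}" and B = "{1..n}"])
  show "k ` {1..J} \<subseteq> {1..n}" if "?P k" for k using that by auto
next
  fix k k' :: "nat \<Rightarrow> nat" assume same: "\<And>j. j \<in> {1..J} \<Longrightarrow> k j = k' j"
  have "(\<Sum>j = 1..J - 1. Gjmax j (k j) - Gjmin j (k (j + 1) + 1))
      = (\<Sum>j = 1..J - 1. Gjmax j (k' j) - Gjmin j (k' (j + 1) + 1))"
    using same by (intro sum.cong) auto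
  moreover have "k J = k' J" "k 1 = k' 1" using same assms by auto
  ultimately show "?T k = ?T k'" by simp
qed simp_all

theorem theorem3:
  fixes U :: "nat \<Rightarrow> real" and V :: "nat \<Rightarrow> nat \<Rightarrow> real"
    and Gjmin Gjmax :: "nat \<Rightarrow> nat \<Rightarrow> real" and Gmin Gmax :: "nat \<Rightarrow> real"
    and J n :: nat
  assumes "J \<ge> 1" and "n \<ge> 1"
    and U_nn: "\<And>l. 1 \<le> l \<Longrightarrow> l \<le> n \<Longrightarrow> U l \<ge> 0"
    and V_nn: "\<And>j i. 1 \<le> j \<Longrightarrow> j \<le> J \<Longrightarrow> 1 \<le> i \<Longrightarrow> i \<le> n \<Longrightarrow> V j i \<ge> 0"
    and G_nn: "\<And>j k. 1 \<le> j \<Longrightarrow> j \<le> J \<Longrightarrow> 1 \<le> k \<Longrightarrow> k \<le> n \<Longrightarrow>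
                   Gjmin j k \<ge> 0 \<and> Gjmax j k \<ge> 0"
    and G_nn': "\<And>k. 1 \<le> k \<Longrightarrow> k \<le> n \<Longrightarrow> Gmin k \<ge> 0 \<and> Gmax k \<ge> 0"
    and V_bounds: "\<And>j k. 1 \<le> j \<Longrightarrow> j \<le> J \<Longrightarrow> 1 \<le> k \<Longrightarrow> k \<le> n \<Longrightarrow>
                   Gjmin j k \<le> (\<Sum>i = k..n. V j i) \<and> (\<Sum>i = k..n. V j i) \<le> Gjmax j k"
    and U_bounds: "\<And>k. 1 \<le> k \<Longrightarrow> k \<le> n \<Longrightarrow>
                   Gmin k \<le> (\<Sum>i = k..n. U i) \<and> (\<Sum>i = k..n. U i) \<le> Gmax k"
    and conv_j: "\<And>j. 1 \<le> j \<Longrightarrow> j \<le> J \<Longrightarrow> Gjmin j (n + 1) = 0"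
    and conv: "Gmin (n + 1) = 0"
  shows "sojourn U V J n \<le>
    Max { (\<Sum>j = 1..J - 1. Gjmax j (k j) - Gjmin j (k (j + 1) + 1))
            + Gjmax J (k J) - Gmin (k 1 + 1)
          | k :: nat \<Rightarrow> nat.
            (\<forall>j \<in> {1..J}. 1 \<le> k j \<and> k j \<le> n) \<and> (\<forall>j \<in> {1..<J}. k j \<le> k (j + 1)) }"
    (is "_ \<le> Max {?T k | k. ?P k}")
proof -
  obtain k where path: "lattice_path J n k" and dep: "dep U V J n = path_weight U V J k"
    using dep_is_path_weight \<open>n \<ge> 1\<close> by blast
  have "path_weight U V J k - arr U n \<le> ?T k"
    using path_weight_bound[where U = U and V = V and Gjmin = Gjmin and Gjmax = Gjmax
        and Gmin = Gmin and J = J and n = n and k = k,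
        OF \<open>J \<ge> 1\<close> path V_bounds conjunct1[OF U_bounds] conv_j conv] .
  then have bound: "sojourn U V J n \<le> ?T k" using dep by (simp add: sojourn_def)
  have Pk: "?P k"
  proof
    show "\<forall>j \<in> {1..J}. 1 \<le> k j \<and> k j \<le> n" using lattice_path_range[OF path] by simp
    show "\<forall>j \<in> {1..<J}. k j \<le> k (j + 1)" using path by (simp add: lattice_path_def)
  qed
  have "?T k \<in> {?T k | k. ?P k}" using Pk by (intro CollectI exI[of _ k]) simp
  then have "?T k \<le> Max {?T k | k. ?P k}"
    by (rule Max_ge[OF finite_envelope_values[OF \<open>J \<ge> 1\<close>]])
  with bound show ?thesis by (rule order_trans)
qed

end
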